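(* Let $n\ge 2$ and let $\eta_1,\dots,\eta_n$ be real numbers with $\eta_1+\cdots+\eta_n=0$ and $\eta_1^2+\cdots+\eta_n^2=1$. Let $r_{ij}\geq 0$ be nonnegative real numbers for $1\le i<j\le n$. Then \[ \sum_{i<j}(\eta_i-\eta_j)^2 r_{ij}\leq \sum_{i<j}r_{ij}+\max_{i<j} r_{ij}. \] *)

theory Defs
  imports Main "HOL.Real"
begin

end

theory Submission
  imports Defs
begin

text \<open>
  Write \<open>d k\<close> for the total weight of the pairs containing \<open>k\<close>. For a pair \<open>(i, j)\<close> of positive
  weight, Cauchy--Schwarz gives
  \<open>(\<eta>\<^sub>i - \<eta>\<^sub>j)\<^sup>2 \<le> (d i + d j) (\<eta>\<^sub>i\<^sup>2 / d i + \<eta>\<^sub>j\<^sup>2 / d j)\<close>, and \<open>d i + d j\<close> counts only the weight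
  \<open>r\<^sub>i\<^sub>j\<close> twice, so it is at most \<open>\<Sum> r + max r\<close>. Multiplying by \<open>r\<^sub>i\<^sub>j\<close> and summing over the pairs,
  the right-hand factor regroups by vertices into \<open>\<Sum>\<^sub>k (\<eta>\<^sub>k\<^sup>2 / d k) d k \<le> \<Sum>\<^sub>k \<eta>\<^sub>k\<^sup>2 = 1\<close>.
\<close>

lemma square_diff_le_mult_sum_div:
  fixes a b x y :: real
  assumes "x > 0" "y > 0"
  shows "(a - b)^2 \<le> (x + y) * (a^2 / x + b^2 / y)"
proof -
  have "(x + y) * (a^2 / x + b^2 / y) - (a - b)^2 = (a * y + b * x)^2 / (x * y)"
    using assms by (simp add: field_simps power2_eq_square)
  moreover have "(a * y + b * x)^2 / (x * y) \<ge> 0"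
    using assms by simp
  ultimately show ?thesis by linarith
qed

definition weighted_degree :: "('a \<times> 'a \<Rightarrow> real) \<Rightarrow> ('a \<times> 'a) set \<Rightarrow> 'a \<Rightarrow> real" where
  "weighted_degree w P k = (\<Sum>p\<in>{p\<in>P. fst p = k \<or> snd p = k}. w p)"

lemma weighted_degree_nonneg:
  assumes "\<And>p. p \<in> P \<Longrightarrow> 0 \<le> w p"
  shows "0 \<le> weighted_degree w P k"
  unfolding weighted_degree_def using assms by (auto intro: sum_nonneg)

lemma weight_le_weighted_degree:
  assumes "finite P" "\<And>p. p \<in> P \<Longrightarrow> 0 \<le> w p" "p \<in> P"
  shows "w p \<le> weighted_degree w P (fst p)" and "w p \<le> weighted_degree w P (snd p)"
  unfolding weighted_degree_def using assms by (auto intro!: member_le_sum)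

lemma weighted_degree_endpoints_le:
  fixes P :: "('a::linorder \<times> 'a) set"
  assumes "finite P" "\<And>p. p \<in> P \<Longrightarrow> 0 \<le> w p" "\<And>p. p \<in> P \<Longrightarrow> fst p < snd p" "p \<in> P"
  shows "weighted_degree w P (fst p) + weighted_degree w P (snd p) \<le> sum w P + w p"
proof -
  define A where "A = {q\<in>P. fst q = fst p \<or> snd q = fst p}"
  define B where "B = {q\<in>P. fst q = snd p \<or> snd q = snd p}"
  have "A \<inter> B = {p}"
    using assms(3)[of p] assms(4) by (auto simp: A_def B_def prod_eq_iff dest: assms(3))
  moreover have "finite A" "finite B"
    using assms(1) by (auto simp: A_def B_def)
  moreover have "sum w (A \<union> B) \<le> sum w P"
    using assms(1,2) by (intro sum_mono2) (auto simp: A_def B_def)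
  ultimately show ?thesis
    using sum.union_inter[of A B w] by (simp add: weighted_degree_def A_def B_def)
qed

lemma sum_mult_weighted_degree:
  assumes "finite I" "finite P" "\<And>p. p \<in> P \<Longrightarrow> fst p \<in> I \<and> snd p \<in> I \<and> fst p \<noteq> snd p"
  shows "(\<Sum>k\<in>I. f k * weighted_degree w P k) = (\<Sum>p\<in>P. w p * (f (fst p) + f (snd p)))"
proof -
  have "(\<Sum>k\<in>I. f k * weighted_degree w P k)
      = (\<Sum>k\<in>I. \<Sum>p\<in>P. if fst p = k \<or> snd p = k then f k * w p else 0)"
    unfolding weighted_degree_def
    by (simp add: sum_distrib_left sum.inter_filter[OF assms(2)] if_distrib cong: if_cong)
  also have "\<dots> = (\<Sum>p\<in>P. \<Sum>k\<in>I. if fst p = k \<or> snd p = k then f k * w p else 0)"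
    by (rule sum.swap)
  also have "\<dots> = (\<Sum>p\<in>P. w p * (f (fst p) + f (snd p)))"
  proof (rule sum.cong[OF refl])
    fix p assume "p \<in> P"
    then have "fst p \<in> I" "snd p \<in> I" "fst p \<noteq> snd p"
      using assms(3) by auto
    then have "(\<Sum>k\<in>I. if fst p = k \<or> snd p = k then f k * w p else 0)
        = (\<Sum>k\<in>I. (if fst p = k then f k * w p else 0) + (if snd p = k then f k * w p else 0))"
      by (intro sum.cong) auto
    also have "\<dots> = w p * (f (fst p) + f (snd p))"
      using \<open>fst p \<in> I\<close> \<open>snd p \<in> I\<close> assms(1) by (simp add: sum.distrib algebra_simps)
    finally show "(\<Sum>k\<in>I. if fst p = k \<or> snd p = k then f k * w p else 0)
        = w p * (f (fst p) + f (snd p))" .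
  qed
  finally show ?thesis .
qed

lemma sum_square_diff_weighted_le:
  fixes x :: "'a::linorder \<Rightarrow> real" and P :: "('a \<times> 'a) set"
  assumes "finite I"
    and pairs: "\<And>p. p \<in> P \<Longrightarrow> fst p < snd p \<and> fst p \<in> I \<and> snd p \<in> I"
    and weights: "\<And>p. p \<in> P \<Longrightarrow> 0 \<le> w p \<and> w p \<le> M"
    and "0 \<le> M"
  shows "(\<Sum>p\<in>P. (x (fst p) - x (snd p))^2 * w p) \<le> (sum w P + M) * (\<Sum>k\<in>I. (x k)^2)"
proof -
  have "finite P"
    using pairs by (intro finite_subset[of P "I \<times> I"]) (auto simp: assms(1) mem_Times_iff)
  have w0: "\<And>p. p \<in> P \<Longrightarrow> 0 \<le> w p"
    using weights by blast
  define d where "d = weighted_degree w P"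
  define f where "f k = (x k)^2 / d k" for k
  have f0: "0 \<le> f k" for k
    using weighted_degree_nonneg[of P w, OF w0] by (simp add: f_def d_def)
  have "0 \<le> sum w P"
    using w0 by (simp add: sum_nonneg)
  have pair_bound: "(x (fst p) - x (snd p))^2 * w p \<le> (sum w P + M) * (w p * (f (fst p) + f (snd p)))"
    if "p \<in> P" for p
  proof (cases "w p = 0")
    case False
    then have "w p > 0"
      using w0[OF that] by simp
    then have "d (fst p) > 0" "d (snd p) > 0"
      using weight_le_weighted_degree[of P w, OF \<open>finite P\<close> w0 that] by (auto simp: d_def)
    then have "(x (fst p) - x (snd p))^2 \<le> (d (fst p) + d (snd p)) * (f (fst p) + f (snd p))"
      unfolding f_def by (rule square_diff_le_mult_sum_div)
    also have "\<dots> \<le> (sum w P + M) * (f (fst p) + f (snd p))"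
      using weighted_degree_endpoints_le[where P = P and w = w, OF \<open>finite P\<close> w0 _ that] pairs weights[OF that] f0
      by (intro mult_right_mono) (auto simp: d_def add_mono)
    finally show ?thesis
      using \<open>w p > 0\<close> by (simp add: mult_right_mono mult.commute mult.left_commute)
  qed simp
  have "(\<Sum>p\<in>P. (x (fst p) - x (snd p))^2 * w p)
      \<le> (\<Sum>p\<in>P. (sum w P + M) * (w p * (f (fst p) + f (snd p))))"
    by (rule sum_mono) (rule pair_bound)
  also have "\<dots> = (sum w P + M) * (\<Sum>k\<in>I. f k * d k)"
    using sum_mult_weighted_degree[where f = f and w = w, OF assms(1) \<open>finite P\<close>] pairs
    by (simp add: sum_distrib_left[symmetric] d_def less_imp_neq)
  also have "\<dots> \<le> (sum w P + M) * (\<Sum>k\<in>I. (x k)^2)"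
    using \<open>0 \<le> sum w P\<close> \<open>0 \<le> M\<close> by (intro mult_left_mono sum_mono) (auto simp: f_def)
  finally show ?thesis .
qed

theorem mainTheorem4:
  fixes n :: nat and eta :: "nat \<Rightarrow> real" and r :: "nat \<Rightarrow> nat \<Rightarrow> real"
  assumes "n \<ge> 2"
    and "(\<Sum>i=1..n. eta i) = 0"
    and "(\<Sum>i=1..n. (eta i)^2) = 1"
    and "\<And>i j. 1 \<le> i \<Longrightarrow> i < j \<Longrightarrow> j \<le> n \<Longrightarrow> r i j \<ge> 0"
  shows "(\<Sum>(i,j)\<in>{(i,j). 1 \<le> i \<and> i < j \<and> j \<le> n}. (eta i - eta j)^2 * r i j)
         \<le> (\<Sum>(i,j)\<in>{(i,j). 1 \<le> i \<and> i < j \<and> j \<le> n}. r i j)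
           + Max ((\<lambda>(i,j). r i j) ` {(i,j). 1 \<le> i \<and> i < j \<and> j \<le> n})"
proof -
  define P where "P = {(i, j). 1 \<le> i \<and> i < j \<and> j \<le> n}"
  define M where "M = Max (case_prod r ` P)"
  have "finite P"
    by (rule finite_subset[of _ "{1..n} \<times> {1..n}"]) (auto simp: P_def)
  have "(1, 2) \<in> P"
    using assms(1) by (simp add: P_def)
  have r_le_M: "case_prod r p \<le> M" if "p \<in> P" for p
    unfolding M_def using \<open>finite P\<close> that by simp
  have "0 \<le> M"
    using r_le_M[OF \<open>(1, 2) \<in> P\<close>] assms(4)[of 1 2] assms(1) by simp
  have "(\<Sum>p\<in>P. (eta (fst p) - eta (snd p))^2 * case_prod r p)
      \<le> (sum (case_prod r) P + M) * (\<Sum>k\<in>{1..n}. (eta k)^2)"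
    using r_le_M \<open>0 \<le> M\<close> assms(4)
    by (intro sum_square_diff_weighted_le) (auto simp: P_def)
  then show ?thesis
    using assms(3) by (simp add: P_def M_def case_prod_beta)
qed

end
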